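(* Let $\mathcal{G}=(\mathcal{V},\mathcal{E})$ be a connected undirected graph (a transmission network) with nodes $\mathcal{V}=\{1,\dots,N\}$ and edges $e_1,\dots,e_L$, $\mathcal{L}=\{1,\dots,L\}$, each edge given a fixed orientation, with incidence matrix $\mathbf{Q}=(q_{il})\in\mathbb{R}^{N\times L}$ ($q_{il}=1$ if $i$ is the initial node of $e_l$, $-1$ if it is the terminal node, $0$ otherwise). For each node $i\in\mathcal{V}$ let $M_i>0$, $D_i>0$ and consider the linear node plant $$H^\delta_{pi}:\ \dot x^\delta_{pi}=\begin{bmatrix}-D_i/M_i&0\\1&0\end{bmatrix}x^\delta_{pi}+\begin{bmatrix}1/M_i\\0\end{bmatrix}u^\delta_{pi},\qquad y^\delta_{pi}=\begin{bmatrix}0&1\end{bmatrix}x^\delta_{pi},$$ with $x^\delta_{pi}\in\mathbb{R}^2$, $u^\delta_{pi}\in\mathbb{R}$. For each edge $l\in\mathcal{L}$ let $\tau^\delta_l>0$ and $K^\delta_{l[2]}>K^\delta_{l[1]}>0$ and consider the edge controller $$H^\delta_{cl}:\ \dot x^\delta_{cl}=-\tfrac{1}{\tau^\delta_l}x^\delta_{cl}+\tfrac{K^\delta_{l[1]}}{\tau^\delta_l}u^\delta_{cl},\qquad y^\delta_{cl}=x^\delta_{cl}-K^\delta_{l[2]}u^\delta_{cl},$$ with $x^\delta_{cl},u^\delta_{cl}\in\mathbb{R}$. Consider the positive feedback interconnection in which, for each edge $e_l$ with initial node $i$ and terminal node $j$, $u^\delta_{cl}=y^\delta_{pi}-y^\delta_{pj}$,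 and for each node $i$, $u^\delta_{pi}=\sum_{l=1}^L q_{il}y^\delta_{cl}$. Then this closed-loop system achieves output consensus: there exists an open domain $\mathcal{D}_c$ in the joint state space containing the origin such that $\lim_{t\to\infty}|y^\delta_{pi}(t)-y^\delta_{pj}(t)|=0$ for all $i,j\in\mathcal{V}$ and all initial conditions in $\mathcal{D}_c$.
   Context: In the application, $x^\delta_{pi}=[\dot{\tilde\delta}_i,\tilde\delta_i]^\top$ where $\tilde\delta_i$ is the deviation of the voltage angle of generator bus $i$ from equilibrium, $M_i$ is the machine inertia constant and $D_i$ the machine damping constant. *)

theory Defs
  imports "HOL-Analysis.Analysis"
begin

text \<open>Nodes are the elements of a finite type 'v, edges the elements of a finite type 'e.
  Edge l is oriented from src l (initial node) to dst l (terminal node).\<close>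

definition incidence :: "('e \<Rightarrow> 'v) \<Rightarrow> ('e \<Rightarrow> 'v) \<Rightarrow> 'v \<Rightarrow> 'e \<Rightarrow> real" where
  "incidence src dst i l = (if src l = i then 1 else if dst l = i then -1 else 0)"

definition graph_adj :: "('e \<Rightarrow> 'v) \<Rightarrow> ('e \<Rightarrow> 'v) \<Rightarrow> 'v \<Rightarrow> 'v \<Rightarrow> bool" where
  "graph_adj src dst i j = (\<exists>l. (src l = i \<and> dst l = j) \<or> (src l = j \<and> dst l = i))"

definition graph_connected :: "('e \<Rightarrow> 'v) \<Rightarrow> ('e \<Rightarrow> 'v) \<Rightarrow> bool" where
  "graph_connected src dst = (\<forall>i j. (graph_adj src dst)\<^sup>*\<^sup>* i j)"

definition simple_graph :: "('e \<Rightarrow> 'v) \<Rightarrow> ('e \<Rightarrow> 'v) \<Rightarrow> bool" where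
  "simple_graph src dst =
     ((\<forall>l. src l \<noteq> dst l) \<and>
      (\<forall>l l'. {src l, dst l} = {src l', dst l'} \<longrightarrow> l = l'))"

text \<open>Closed-loop trajectory on [0,\<infinity>): node states x_pi = (w i, d i) with w = d', the
  plant output y_pi = d i; edge controller states c l.  Interconnection:
  u_cl = y_p(src l) - y_p(dst l), u_pi = sum_l q_il y_cl.\<close>
definition closed_loop_solution ::
  "('v::finite \<Rightarrow> real) \<Rightarrow> ('v \<Rightarrow> real) \<Rightarrow> ('e::finite \<Rightarrow> real) \<Rightarrow> ('e \<Rightarrow> real) \<Rightarrow> ('e \<Rightarrow> real)
   \<Rightarrow> ('e \<Rightarrow> 'v) \<Rightarrow> ('e \<Rightarrow> 'v)
   \<Rightarrow> (real \<Rightarrow> 'v \<Rightarrow> real) \<Rightarrow> (real \<Rightarrow> 'v \<Rightarrow> real) \<Rightarrow> (real \<Rightarrow> 'e \<Rightarrow> real) \<Rightarrow> bool" where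
  "closed_loop_solution M Dmp tau K1 K2 src dst w d c =
     (\<forall>t\<ge>0.
        let yp = d t;
            uc = (\<lambda>l. yp (src l) - yp (dst l));
            yc = (\<lambda>l. c t l - K2 l * uc l);
            up = (\<lambda>i. \<Sum>l\<in>UNIV. incidence src dst i l * yc l)
        in (\<forall>i. ((\<lambda>s. w s i) has_real_derivative
                   (- (Dmp i / M i) * w t i + 0 * d t i + (1 / M i) * up i)) (at t within {0..}))
         \<and> (\<forall>i. ((\<lambda>s. d s i) has_real_derivative (1 * w t i + 0 * d t i)) (at t within {0..}))
         \<and> (\<forall>l. ((\<lambda>s. c s l) has_real_derivative
                   (- (1 / tau l) * c t l + (K1 l / tau l) * uc l)) (at t within {0..})))"

end

theory Submission
  imports Defs
begin

text \<open>
  In the coordinates r = x_c - K1 u_c the loop reads M w' = -D w + Q r - L d, d' = w,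
  r' = -r/tau - K1 Q^T w, where L = Q diag(K2 - K1) Q^T is a weighted Laplacian. Along it the energy
  sum M w^2 + sum (K2 - K1) (Q^T d)^2 + sum r^2 / K1 decreases at rate 2 (sum D w^2 + sum r^2 / (tau K1)),
  which says nothing about the angles. Adding a small multiple of the cross term sum M w (L d), whose
  rate contains -|L d|^2, gives a strict Lyapunov function with derivative at most -gamma times the
  energy. All quadratic forms involved are comparable by homogeneity and compactness of the unit
  sphere, because on a connected graph both L d = 0 and Q^T d = 0 force d to be constant. Hence the
  energy, and with it every edge difference, decays exponentially, and connectivity carries the
  convergence over to all pairs of nodes.
\<close>

lemma homogeneous2_le_const_mult:
  fixes f g :: "'a::euclidean_space \<Rightarrow> real"
  assumes "closed S" and cone: "\<And>x s. x \<in> S \<Longrightarrow> s *\<^sub>R x \<in> S"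
    and "continuous_on S f" "continuous_on S g"
    and f_hom: "\<And>x s. f (s *\<^sub>R x) = s\<^sup>2 * f x" and g_hom: "\<And>x s. g (s *\<^sub>R x) = s\<^sup>2 * g x"
    and g_pos: "\<And>x. x \<in> S \<Longrightarrow> x \<noteq> 0 \<Longrightarrow> g x > 0"
  shows "\<exists>C>0. \<forall>x\<in>S. f x \<le> C * g x"
proof -
  define K where "K = S \<inter> sphere 0 1"
  have g_pos_K: "\<And>u. u \<in> K \<Longrightarrow> g u > 0"
    using g_pos unfolding K_def by force
  have "compact K"
    unfolding K_def using \<open>closed S\<close> by (simp add: closed_Int_compact)
  moreover have "continuous_on K (\<lambda>u. f u / g u)"
    using assms(3,4) g_pos_K unfolding K_def
    by (intro continuous_on_divide) (auto intro: continuous_on_subset simp: less_le)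
  ultimately have "bounded ((\<lambda>u. f u / g u) ` K)"
    by (simp add: compact_continuous_image compact_imp_bounded)
  then obtain B where B: "\<And>u. u \<in> K \<Longrightarrow> f u / g u \<le> B"
    unfolding bounded_real by (fastforce dest: abs_le_D1)
  have "f x \<le> max B 1 * g x" if "x \<in> S" for x
  proof (cases "x = 0")
    case True
    then show ?thesis using f_hom[of 0 0] g_hom[of 0 0] by simp
  next
    case False
    define u where "u = (1 / norm x) *\<^sub>R x"
    have "u \<in> K" using cone[OF that] False unfolding K_def u_def by auto
    then have "g u > 0" by (rule g_pos_K)
    have "f u \<le> B * g u"
      using B[OF \<open>u \<in> K\<close>] \<open>g u > 0\<close> by (simp add: pos_divide_le_eq)
    also have "\<dots> \<le> max B 1 * g u"
      using \<open>g u > 0\<close> by (intro mult_right_mono) auto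
    finally have "f u \<le> max B 1 * g u" .
    then have "(norm x)\<^sup>2 * f u \<le> (norm x)\<^sup>2 * (max B 1 * g u)" by (simp add: mult_left_mono)
    moreover have "x = norm x *\<^sub>R u" using False unfolding u_def by simp
    ultimately show ?thesis using f_hom[of "norm x" u] g_hom[of "norm x" u]
      by (metis mult.left_commute)
  qed
  then show ?thesis by (intro exI[of _ "max B 1"]) auto
qed

lemma vec_nth_scaleR: "vec_nth (c *\<^sub>R x) = (\<lambda>i. c * x $ i)"
  by (simp add: fun_eq_iff)

lemma homogeneous2_le_const_mult_pair:
  fixes f g :: "('a::finite \<Rightarrow> real) \<Rightarrow> ('b::finite \<Rightarrow> real) \<Rightarrow> real"
  assumes "continuous_on UNIV (\<lambda>x::(real^'a) \<times> (real^'b). f (vec_nth (fst x)) (vec_nth (snd x)))"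
    and "continuous_on UNIV (\<lambda>x::(real^'a) \<times> (real^'b). g (vec_nth (fst x)) (vec_nth (snd x)))"
    and f_hom: "\<And>u v s. f (\<lambda>i. s * u i) (\<lambda>j. s * v j) = s\<^sup>2 * f u v"
    and g_hom: "\<And>u v s. g (\<lambda>i. s * u i) (\<lambda>j. s * v j) = s\<^sup>2 * g u v"
    and g_pos: "\<And>u v i j. u i \<noteq> 0 \<or> v j \<noteq> 0 \<Longrightarrow> g u v > 0"
  shows "\<exists>C>0. \<forall>u v. f u v \<le> C * g u v"
proof -
  have "\<exists>C>0. \<forall>x\<in>UNIV. f (vec_nth (fst x)) (vec_nth (snd x)) \<le> C * g (vec_nth (fst x)) (vec_nth (snd x))"
  proof (rule homogeneous2_le_const_mult[OF closed_UNIV _ assms(1,2)])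
    fix x :: "(real^'a) \<times> (real^'b)" and s :: real
    show "s *\<^sub>R x \<in> UNIV" by simp
    show "f (vec_nth (fst (s *\<^sub>R x))) (vec_nth (snd (s *\<^sub>R x))) = s\<^sup>2 * f (vec_nth (fst x)) (vec_nth (snd x))"
      using f_hom[of s "vec_nth (fst x)" "vec_nth (snd x)"]
      by (simp only: fst_scaleR snd_scaleR vec_nth_scaleR)
    show "g (vec_nth (fst (s *\<^sub>R x))) (vec_nth (snd (s *\<^sub>R x))) = s\<^sup>2 * g (vec_nth (fst x)) (vec_nth (snd x))"
      using g_hom[of s "vec_nth (fst x)" "vec_nth (snd x)"]
      by (simp only: fst_scaleR snd_scaleR vec_nth_scaleR)
  next
    fix x :: "(real^'a) \<times> (real^'b)" assume "x \<noteq> 0"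
    then have "fst x \<noteq> 0 \<or> snd x \<noteq> 0" by (simp add: prod_eq_iff)
    then obtain i j where "fst x $ i \<noteq> 0 \<or> snd x $ j \<noteq> 0" by (auto simp: vec_eq_iff)
    then show "g (vec_nth (fst x)) (vec_nth (snd x)) > 0" by (rule g_pos)
  qed
  then obtain C where "C > 0"
    and C: "\<And>x. f (vec_nth (fst x)) (vec_nth (snd x)) \<le> C * g (vec_nth (fst x)) (vec_nth (snd x))"
    by blast
  have "f u v \<le> C * g u v" for u v
    using C[of "(vec_lambda u, vec_lambda v)"] by (simp add: vec_lambda_inverse)
  with \<open>C > 0\<close> show ?thesis by blast
qed

lemma homogeneous2_le_const_mult_shift_invariant:
  fixes f g :: "('a::finite \<Rightarrow> real) \<Rightarrow> real"
  assumes "continuous_on UNIV (\<lambda>x::real^'a. f (vec_nth x))"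
    and "continuous_on UNIV (\<lambda>x::real^'a. g (vec_nth x))"
    and f_hom: "\<And>u s. f (\<lambda>i. s * u i) = s\<^sup>2 * f u"
    and g_hom: "\<And>u s. g (\<lambda>i. s * u i) = s\<^sup>2 * g u"
    and f_shift: "\<And>u a. f (\<lambda>i. u i + a) = f u"
    and g_shift: "\<And>u a. g (\<lambda>i. u i + a) = g u"
    and g_pos: "\<And>u i j. u i \<noteq> u j \<Longrightarrow> g u > 0"
  shows "\<exists>C>0. \<forall>u. f u \<le> C * g u"
proof -
  obtain i0 :: 'a where True by simp
  define S where "S = {x::real^'a. x $ i0 = 0}"
  have "\<exists>C>0. \<forall>x\<in>S. f (vec_nth x) \<le> C * g (vec_nth x)"
  proof (rule homogeneous2_le_const_mult)
    show "closed S" unfolding S_def by (intro closed_Collect_eq continuous_intros)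
    show "continuous_on S (\<lambda>x. f (vec_nth x))" "continuous_on S (\<lambda>x. g (vec_nth x))"
      using assms(1,2) by (auto intro: continuous_on_subset)
    fix x :: "real^'a" and s :: real
    show "x \<in> S \<Longrightarrow> s *\<^sub>R x \<in> S" unfolding S_def by simp
    show "f (vec_nth (s *\<^sub>R x)) = s\<^sup>2 * f (vec_nth x)"
      using f_hom[of s "vec_nth x"] by (simp only: vec_nth_scaleR)
    show "g (vec_nth (s *\<^sub>R x)) = s\<^sup>2 * g (vec_nth x)"
      using g_hom[of s "vec_nth x"] by (simp only: vec_nth_scaleR)
  next
    fix x :: "real^'a" assume "x \<in> S" "x \<noteq> 0"
    then obtain i where "x $ i \<noteq> x $ i0" unfolding S_def by (auto simp: vec_eq_iff)
    then show "g (vec_nth x) > 0" by (rule g_pos)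
  qed
  then obtain C where "C > 0" and C: "\<And>x. x \<in> S \<Longrightarrow> f (vec_nth x) \<le> C * g (vec_nth x)"
    by blast
  have "f u \<le> C * g u" for u
  proof -
    have "(\<chi> i. u i + - u i0) \<in> S" unfolding S_def by simp
    from C[OF this] show ?thesis by (simp only: vec_lambda_inverse UNIV_I f_shift g_shift)
  qed
  with \<open>C > 0\<close> show ?thesis by blast
qed

lemma exp_decay_of_deriv_le:
  fixes V :: "real \<Rightarrow> real"
  assumes "\<And>t. a \<le> t \<Longrightarrow> \<exists>D. (V has_real_derivative D) (at t) \<and> D \<le> - g * V t"
    and "a \<le> t"
  shows "V t \<le> V a * exp (- g * (t - a))"
proof -
  define h where "h s = V s * exp (g * (s - a))" for s
  have "h t \<le> h a"
  proof (rule DERIV_nonpos_imp_nonincreasing[OF \<open>a \<le> t\<close>])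
    fix s assume "a \<le> s"
    then obtain D where D: "(V has_real_derivative D) (at s)" "D \<le> - g * V s"
      using assms(1) by blast
    have "(h has_real_derivative (D + g * V s) * exp (g * (s - a))) (at s)"
      unfolding h_def by (rule derivative_eq_intros D refl | simp add: algebra_simps)+
    moreover have "(D + g * V s) * exp (g * (s - a)) \<le> 0"
      using D(2) by (simp add: mult_nonpos_nonneg)
    ultimately show "\<exists>y. (h has_real_derivative y) (at s) \<and> y \<le> 0" by blast
  qed
  then have "V t * exp (g * (t - a)) * exp (- g * (t - a)) \<le> V a * exp (- g * (t - a))"
    unfolding h_def by (simp add: mult_right_mono)
  then show ?thesis by (simp add: mult.assoc flip: exp_add)
qed

lemma tendsto_0_if_exp_decay:
  fixes f :: "real \<Rightarrow> real"
  assumes "g > 0" and bound: "\<And>t. a \<le> t \<Longrightarrow> 0 \<le> f t \<and> f t \<le> C * exp (- g * (t - a))"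
  shows "(f \<longlongrightarrow> 0) at_top"
proof (rule tendsto_sandwich[OF _ _ tendsto_const])
  have "filterlim (\<lambda>t::real. t - a) at_top at_top"
    by (rule filterlim_tendsto_add_at_top[OF tendsto_const filterlim_ident, of "- a", simplified])
  then have "filterlim (\<lambda>t. - g * (t - a)) at_bot at_top"
    using \<open>g > 0\<close> by (intro filterlim_cmult_at_bot_at_top) auto
  then have "((\<lambda>t. exp (- g * (t - a))) \<longlongrightarrow> 0) at_top"
    by (rule filterlim_compose[OF exp_at_bot])
  then show "((\<lambda>t. C * exp (- g * (t - a))) \<longlongrightarrow> 0) at_top"
    by (rule tendsto_mult_right_zero)
  show "\<forall>\<^sub>F t in at_top. 0 \<le> f t" "\<forall>\<^sub>F t in at_top. f t \<le> C * exp (- g * (t - a))"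
    using bound by (auto intro: eventually_at_top_linorderI[of a])
qed

lemma graph_connected_equivp:
  assumes "graph_connected src dst" and "equivp R" and edge: "\<And>l. R (src l) (dst l)"
  shows "R i j"
proof -
  have "(graph_adj src dst)\<^sup>*\<^sup>* i j"
    using assms(1) unfolding graph_connected_def by blast
  then show ?thesis
  proof (induction rule: rtranclp_induct)
    case base
    show ?case using \<open>equivp R\<close> by (rule equivp_reflp)
  next
    case (step y z)
    then obtain l where "(src l = y \<and> dst l = z) \<or> (src l = z \<and> dst l = y)"
      unfolding graph_adj_def by blast
    then have "R y z" using edge[of l] \<open>equivp R\<close> by (metis equivp_symp)
    with step.IH show ?case using \<open>equivp R\<close> by (metis equivp_transp)
  qed
qed

locale consensus_loop =
  fixes M Dmp :: "'v::finite \<Rightarrow> real" and tau K1 K2 :: "'e::finite \<Rightarrow> real"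
    and src dst :: "'e \<Rightarrow> 'v"
  assumes no_self_loop: "\<And>l. src l \<noteq> dst l" and connected: "graph_connected src dst"
    and M_pos: "\<And>i. M i > 0" and D_pos: "\<And>i. Dmp i > 0"
    and tau_pos: "\<And>l. tau l > 0" and K1_pos: "\<And>l. K1 l > 0" and K1_less_K2: "\<And>l. K1 l < K2 l"
begin

definition edge_diff :: "('v \<Rightarrow> real) \<Rightarrow> 'e \<Rightarrow> real" where
  "edge_diff x l = x (src l) - x (dst l)"

definition node_sum :: "('e \<Rightarrow> real) \<Rightarrow> 'v \<Rightarrow> real" where
  "node_sum a i = (\<Sum>l\<in>UNIV. incidence src dst i l * a l)"

definition Kgap :: "'e \<Rightarrow> real" where
  "Kgap l = K2 l - K1 l"

definition laplacian :: "('v \<Rightarrow> real) \<Rightarrow> 'v \<Rightarrow> real" where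
  "laplacian x = node_sum (\<lambda>l. Kgap l * edge_diff x l)"

lemma Kgap_pos: "Kgap l > 0"
  using K1_less_K2[of l] unfolding Kgap_def by simp

lemma sum_incidence_mult: "(\<Sum>i\<in>UNIV. incidence src dst i l * x i) = edge_diff x l"
proof -
  have "(\<Sum>i\<in>UNIV. incidence src dst i l * x i)
      = (\<Sum>i\<in>UNIV. (if i = src l then x i else 0) - (if i = dst l then x i else 0))"
    by (rule sum.cong) (use no_self_loop[of l] in \<open>auto simp: incidence_def\<close>)
  then show ?thesis by (simp add: sum_subtractf edge_diff_def)
qed

lemma sum_mult_node_sum: "(\<Sum>i\<in>UNIV. x i * node_sum a i) = (\<Sum>l\<in>UNIV. a l * edge_diff x l)"
proof -
  have "(\<Sum>i\<in>UNIV. x i * node_sum a i) = (\<Sum>i\<in>UNIV. \<Sum>l\<in>UNIV. a l * (incidence src dst i l * x i))"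
    unfolding node_sum_def by (simp add: sum_distrib_left algebra_simps)
  also have "\<dots> = (\<Sum>l\<in>UNIV. a l * edge_diff x l)"
    by (subst sum.swap) (simp add: sum_incidence_mult flip: sum_distrib_left)
  finally show ?thesis .
qed

lemma edge_diff_scale: "edge_diff (\<lambda>i. s * x i) l = s * edge_diff x l"
  by (simp add: edge_diff_def algebra_simps)

lemma edge_diff_shift: "edge_diff (\<lambda>i. x i + a) = edge_diff x"
  by (simp add: edge_diff_def fun_eq_iff)

lemma node_sum_scale: "node_sum (\<lambda>l. s * a l) i = s * node_sum a i"
  by (simp add: node_sum_def sum_distrib_left algebra_simps)

lemma node_sum_diff: "node_sum (\<lambda>l. a l - b l) i = node_sum a i - node_sum b i"
  by (simp add: node_sum_def algebra_simps sum_subtractf)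

lemma laplacian_scale: "laplacian (\<lambda>i. s * x i) i = s * laplacian x i"
  unfolding laplacian_def edge_diff_scale using node_sum_scale[of s "\<lambda>l. Kgap l * edge_diff x l"]
  by (simp add: algebra_simps)

lemma laplacian_shift: "laplacian (\<lambda>i. x i + a) = laplacian x"
  by (simp add: laplacian_def edge_diff_shift)

lemma edge_diff_has_derivative:
  assumes "\<And>i. ((\<lambda>s. x s i) has_real_derivative x' i) (at t)"
  shows "((\<lambda>s. edge_diff (x s) l) has_real_derivative edge_diff x' l) (at t)"
  unfolding edge_diff_def by (intro derivative_intros assms)

lemma laplacian_has_derivative:
  assumes "\<And>i. ((\<lambda>s. x s i) has_real_derivative x' i) (at t)"
  shows "((\<lambda>s. laplacian (x s) i) has_real_derivative laplacian x' i) (at t)"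
  unfolding laplacian_def node_sum_def
  by (intro DERIV_sum DERIV_cmult edge_diff_has_derivative assms)

lemma const_if_edge_diff_eq_0:
  assumes "\<And>l. edge_diff x l = 0"
  shows "x i = x j"
  by (rule graph_connected_equivp[OF connected, where R = "\<lambda>i j. x i = x j"])
     (use assms in \<open>auto simp: equivp_def fun_eq_iff edge_diff_def\<close>)

definition kinetic :: "('v \<Rightarrow> real) \<Rightarrow> real" where
  "kinetic w = (\<Sum>i\<in>UNIV. M i * (w i)\<^sup>2)"

definition potential :: "('v \<Rightarrow> real) \<Rightarrow> real" where
  "potential d = (\<Sum>l\<in>UNIV. Kgap l * (edge_diff d l)\<^sup>2)"

definition ctrl_energy :: "('e \<Rightarrow> real) \<Rightarrow> real" where
  "ctrl_energy r = (\<Sum>l\<in>UNIV. (r l)\<^sup>2 / K1 l)"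

definition energy :: "('v \<Rightarrow> real) \<Rightarrow> ('v \<Rightarrow> real) \<Rightarrow> ('e \<Rightarrow> real) \<Rightarrow> real" where
  "energy w d r = kinetic w + potential d + ctrl_energy r"

definition dissipation :: "('v \<Rightarrow> real) \<Rightarrow> ('e \<Rightarrow> real) \<Rightarrow> real" where
  "dissipation w r = (\<Sum>i\<in>UNIV. Dmp i * (w i)\<^sup>2) + (\<Sum>l\<in>UNIV. (r l)\<^sup>2 / (tau l * K1 l))"

definition laplacian_sq :: "('v \<Rightarrow> real) \<Rightarrow> real" where
  "laplacian_sq d = (\<Sum>i\<in>UNIV. (laplacian d i)\<^sup>2)"

definition weighted_laplacian_sq :: "('v \<Rightarrow> real) \<Rightarrow> real" where
  "weighted_laplacian_sq d = (\<Sum>i\<in>UNIV. M i * (laplacian d i)\<^sup>2)"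

definition cross :: "('v \<Rightarrow> real) \<Rightarrow> ('v \<Rightarrow> real) \<Rightarrow> real" where
  "cross w d = (\<Sum>i\<in>UNIV. M i * w i * laplacian d i)"

definition cross_rate :: "('v \<Rightarrow> real) \<Rightarrow> ('v \<Rightarrow> real) \<Rightarrow> ('e \<Rightarrow> real) \<Rightarrow> real" where
  "cross_rate w d r =
     (\<Sum>i\<in>UNIV. (node_sum r i - Dmp i * w i - laplacian d i) * laplacian d i + M i * w i * laplacian w i)"

definition cross_rate_bound :: "('v \<Rightarrow> real) \<Rightarrow> ('e \<Rightarrow> real) \<Rightarrow> real" where
  "cross_rate_bound w r = (\<Sum>i\<in>UNIV. (node_sum r i - Dmp i * w i)\<^sup>2 / 2 + M i * w i * laplacian w i)"

lemma kinetic_nonneg: "kinetic w \<ge> 0"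
  unfolding kinetic_def using M_pos by (intro sum_nonneg) (simp add: less_imp_le)

lemma potential_nonneg: "potential d \<ge> 0"
  unfolding potential_def using Kgap_pos by (intro sum_nonneg) (simp add: less_imp_le)

lemma ctrl_energy_nonneg: "ctrl_energy r \<ge> 0"
  unfolding ctrl_energy_def using K1_pos by (intro sum_nonneg) (simp add: less_imp_le)

lemma energy_nonneg: "energy w d r \<ge> 0"
  unfolding energy_def using kinetic_nonneg potential_nonneg ctrl_energy_nonneg
  by (meson add_nonneg_nonneg)

lemma dissipation_nonneg: "dissipation w r \<ge> 0"
  unfolding dissipation_def using D_pos tau_pos K1_pos
  by (intro add_nonneg_nonneg sum_nonneg) (simp_all add: less_imp_le)

lemma potential_eq_sum_laplacian: "potential d = (\<Sum>i\<in>UNIV. d i * laplacian d i)"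
  unfolding potential_def laplacian_def sum_mult_node_sum by (simp add: power2_eq_square mult.assoc)

lemma potential_pos_if_nonconst:
  assumes "d i \<noteq> d j"
  shows "potential d > 0"
proof -
  obtain l where "edge_diff d l \<noteq> 0" using assms const_if_edge_diff_eq_0 by blast
  then have "Kgap l * (edge_diff d l)\<^sup>2 > 0" using Kgap_pos[of l] by simp
  then show ?thesis
    unfolding potential_def using Kgap_pos by (intro sum_pos2[of _ l]) (simp_all add: less_imp_le)
qed

lemma laplacian_sq_pos_if_nonconst:
  assumes "d i \<noteq> d j"
  shows "laplacian_sq d > 0"
proof -
  obtain k where "laplacian d k \<noteq> 0"
    using potential_pos_if_nonconst[OF assms] by (force simp: potential_eq_sum_laplacian)
  then show ?thesis unfolding laplacian_sq_def by (intro sum_pos2[of _ k]) auto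
qed

lemma dissipation_pos:
  assumes "w i \<noteq> 0 \<or> r l \<noteq> 0"
  shows "dissipation w r > 0"
proof -
  have "(\<Sum>i\<in>UNIV. Dmp i * (w i)\<^sup>2) \<ge> 0" "(\<Sum>l\<in>UNIV. (r l)\<^sup>2 / (tau l * K1 l)) \<ge> 0"
    using D_pos tau_pos K1_pos by (simp_all add: sum_nonneg less_imp_le)
  moreover have "(\<Sum>i\<in>UNIV. Dmp i * (w i)\<^sup>2) > 0 \<or> (\<Sum>l\<in>UNIV. (r l)\<^sup>2 / (tau l * K1 l)) > 0"
  proof (cases "w i = 0")
    case True
    then show ?thesis using assms tau_pos K1_pos
      by (intro disjI2 sum_pos2[of _ l]) (simp_all add: less_imp_le)
  next
    case False
    then show ?thesis using D_pos by (intro disjI1 sum_pos2[of _ i]) (simp_all add: less_imp_le)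
  qed
  ultimately show ?thesis unfolding dissipation_def by linarith
qed

lemma cross_rate_bound_le_dissipation: "\<exists>C>0. \<forall>w r. cross_rate_bound w r \<le> C * dissipation w r"
proof (rule homogeneous2_le_const_mult_pair)
  show "continuous_on UNIV (\<lambda>x::(real^'v) \<times> (real^'e). cross_rate_bound (vec_nth (fst x)) (vec_nth (snd x)))"
    "continuous_on UNIV (\<lambda>x::(real^'v) \<times> (real^'e). dissipation (vec_nth (fst x)) (vec_nth (snd x)))"
    unfolding cross_rate_bound_def dissipation_def laplacian_def node_sum_def edge_diff_def
    using K1_pos tau_pos by (auto intro!: continuous_intros simp: less_imp_neq[symmetric])
  show "cross_rate_bound (\<lambda>i. s * w i) (\<lambda>l. s * r l) = s\<^sup>2 * cross_rate_bound w r" for s w r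
    unfolding cross_rate_bound_def node_sum_scale laplacian_scale
    by (simp add: sum_distrib_left power2_eq_square algebra_simps flip: sum.distrib)
  show "dissipation (\<lambda>i. s * w i) (\<lambda>l. s * r l) = s\<^sup>2 * dissipation w r" for s w r
    unfolding dissipation_def by (simp add: sum_distrib_left power2_eq_square algebra_simps)
qed (rule dissipation_pos)

lemma kinetic_ctrl_energy_le_dissipation:
  "\<exists>C>0. \<forall>w r. kinetic w + ctrl_energy r \<le> C * dissipation w r"
proof (rule homogeneous2_le_const_mult_pair)
  show "continuous_on UNIV (\<lambda>x::(real^'v) \<times> (real^'e). kinetic (vec_nth (fst x)) + ctrl_energy (vec_nth (snd x)))"
    "continuous_on UNIV (\<lambda>x::(real^'v) \<times> (real^'e). dissipation (vec_nth (fst x)) (vec_nth (snd x)))"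
    unfolding kinetic_def ctrl_energy_def dissipation_def
    using K1_pos tau_pos by (auto intro!: continuous_intros simp: less_imp_neq[symmetric])
  show "kinetic (\<lambda>i. s * w i) + ctrl_energy (\<lambda>l. s * r l) = s\<^sup>2 * (kinetic w + ctrl_energy r)" for s w r
    unfolding kinetic_def ctrl_energy_def
    by (simp add: sum_distrib_left power2_eq_square algebra_simps)
  show "dissipation (\<lambda>i. s * w i) (\<lambda>l. s * r l) = s\<^sup>2 * dissipation w r" for s w r
    unfolding dissipation_def by (simp add: sum_distrib_left power2_eq_square algebra_simps)
qed (rule dissipation_pos)

lemma potential_le_laplacian_sq: "\<exists>C>0. \<forall>d. potential d \<le> C * laplacian_sq d"
proof (rule homogeneous2_le_const_mult_shift_invariant)
  show "continuous_on UNIV (\<lambda>x::real^'v. potential (vec_nth x))"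
    "continuous_on UNIV (\<lambda>x::real^'v. laplacian_sq (vec_nth x))"
    unfolding potential_def laplacian_sq_def laplacian_def node_sum_def edge_diff_def
    by (intro continuous_intros)+
  show "potential (\<lambda>i. s * d i) = s\<^sup>2 * potential d" for s d
    unfolding potential_def edge_diff_scale
    by (simp add: sum_distrib_left power2_eq_square algebra_simps)
  show "laplacian_sq (\<lambda>i. s * d i) = s\<^sup>2 * laplacian_sq d" for s d
    unfolding laplacian_sq_def laplacian_scale
    by (simp add: sum_distrib_left power2_eq_square algebra_simps)
qed (rule laplacian_sq_pos_if_nonconst
    | simp add: potential_def laplacian_sq_def edge_diff_shift laplacian_shift)+

lemma weighted_laplacian_sq_le_potential: "\<exists>C>0. \<forall>d. weighted_laplacian_sq d \<le> C * potential d"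
proof (rule homogeneous2_le_const_mult_shift_invariant)
  show "continuous_on UNIV (\<lambda>x::real^'v. weighted_laplacian_sq (vec_nth x))"
    "continuous_on UNIV (\<lambda>x::real^'v. potential (vec_nth x))"
    unfolding potential_def weighted_laplacian_sq_def laplacian_def node_sum_def edge_diff_def
    by (intro continuous_intros)+
  show "weighted_laplacian_sq (\<lambda>i. s * d i) = s\<^sup>2 * weighted_laplacian_sq d" for s d
    unfolding weighted_laplacian_sq_def laplacian_scale
    by (simp add: sum_distrib_left power2_eq_square algebra_simps)
  show "potential (\<lambda>i. s * d i) = s\<^sup>2 * potential d" for s d
    unfolding potential_def edge_diff_scale
    by (simp add: sum_distrib_left power2_eq_square algebra_simps)
qed (rule potential_pos_if_nonconst
    | simp add: potential_def weighted_laplacian_sq_def edge_diff_shift laplacian_shift)+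

lemma abs_cross_le: "\<bar>cross w d\<bar> \<le> kinetic w / 2 + weighted_laplacian_sq d / 2"
proof -
  have "\<bar>M i * w i * laplacian d i\<bar> \<le> M i * (w i)\<^sup>2 / 2 + M i * (laplacian d i)\<^sup>2 / 2" for i
  proof -
    have "0 \<le> M i * (\<bar>w i\<bar> - \<bar>laplacian d i\<bar>)\<^sup>2" using M_pos[of i] by simp
    then show ?thesis using M_pos[of i] by (simp add: power2_eq_square algebra_simps abs_mult)
  qed
  then have "(\<Sum>i\<in>UNIV. \<bar>M i * w i * laplacian d i\<bar>) \<le> kinetic w / 2 + weighted_laplacian_sq d / 2"
    unfolding kinetic_def weighted_laplacian_sq_def
    by (simp add: sum_divide_distrib flip: sum.distrib) (rule sum_mono)
  then show ?thesis
    unfolding cross_def using sum_abs[of "\<lambda>i. M i * w i * laplacian d i" UNIV] by linarith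
qed

lemma cross_rate_le: "cross_rate w d r \<le> cross_rate_bound w r - laplacian_sq d / 2"
proof -
  have young: "(a - p) * p + m \<le> a\<^sup>2 / 2 + m - p\<^sup>2 / 2" for a p m :: real
    using sum_power2_ge_zero[of "a - p" 0] by (simp add: power2_eq_square algebra_simps)
  then have "cross_rate w d r \<le> (\<Sum>i\<in>UNIV. (node_sum r i - Dmp i * w i)\<^sup>2 / 2
      + M i * w i * laplacian w i - (laplacian d i)\<^sup>2 / 2)"
    unfolding cross_rate_def by (intro sum_mono young)
  then show ?thesis
    unfolding cross_rate_bound_def laplacian_sq_def by (simp add: sum_subtractf sum_divide_distrib)
qed

lemma abs_cross_le_energy: obtains B where "B > 0" and "\<And>w d r. \<bar>cross w d\<bar> \<le> B * energy w d r"
proof -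
  obtain C where "C > 0" and C: "\<And>d. weighted_laplacian_sq d \<le> C * potential d"
    using weighted_laplacian_sq_le_potential by blast
  have "\<bar>cross w d\<bar> \<le> (1 + C) / 2 * energy w d r" for w d r
  proof -
    have "\<bar>cross w d\<bar> \<le> kinetic w / 2 + C * potential d / 2"
      using abs_cross_le[of w d] C[of d] by linarith
    also have "\<dots> \<le> (1 + C) / 2 * energy w d r"
      using \<open>C > 0\<close> kinetic_nonneg[of w] potential_nonneg[of d] ctrl_energy_nonneg[of r]
      unfolding energy_def by (simp add: field_simps add_increasing2)
    finally show ?thesis .
  qed
  with \<open>C > 0\<close> show thesis by (intro that[of "(1 + C) / 2"]) auto
qed

lemma energy_le_dissipation_laplacian_sq:
  obtains C where "C > 0" and "\<And>w d r. energy w d r \<le> C * (dissipation w r + laplacian_sq d)"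
proof -
  obtain C1 where "C1 > 0" and C1: "\<And>w r. kinetic w + ctrl_energy r \<le> C1 * dissipation w r"
    using kinetic_ctrl_energy_le_dissipation by blast
  obtain C2 where "C2 > 0" and C2: "\<And>d. potential d \<le> C2 * laplacian_sq d"
    using potential_le_laplacian_sq by blast
  have "energy w d r \<le> (C1 + C2) * (dissipation w r + laplacian_sq d)" for w d r
  proof -
    have "C1 * dissipation w r \<le> (C1 + C2) * dissipation w r"
      using \<open>C2 > 0\<close> dissipation_nonneg[of w r] by (intro mult_right_mono) auto
    moreover have "C2 * laplacian_sq d \<le> (C1 + C2) * laplacian_sq d"
      using \<open>C1 > 0\<close> sum_nonneg[of UNIV "\<lambda>i. (laplacian d i)\<^sup>2"]
      unfolding laplacian_sq_def by (intro mult_right_mono) auto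
    ultimately show ?thesis
      using C1[of w r] C2[of d] unfolding energy_def by (simp add: distrib_left)
  qed
  with \<open>C1 > 0\<close> \<open>C2 > 0\<close> show thesis by (intro that[of "C1 + C2"]) auto
qed

lemma strict_lyapunov:
  obtains \<epsilon> \<gamma> :: real where "\<epsilon> > 0" and "\<gamma> > 0"
    and "\<And>w d r. \<epsilon> * \<bar>cross w d\<bar> \<le> energy w d r / 2"
    and "\<And>w d r. - 2 * dissipation w r + \<epsilon> * cross_rate w d r \<le> - \<gamma> * energy w d r"
proof -
  obtain B where "B > 0" and B: "\<And>w d r. \<bar>cross w d\<bar> \<le> B * energy w d r"
    using abs_cross_le_energy by blast
  obtain C where "C > 0" and C: "\<And>w d r. energy w d r \<le> C * (dissipation w r + laplacian_sq d)"
    using energy_le_dissipation_laplacian_sq by blast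
  obtain C' where "C' > 0" and C': "\<And>w r. cross_rate_bound w r \<le> C' * dissipation w r"
    using cross_rate_bound_le_dissipation by blast
  define \<epsilon> where "\<epsilon> = 1 / (1 + 2 * B + C')"
  have "\<epsilon> > 0" "\<epsilon> \<le> 1" "\<epsilon> * B \<le> 1 / 2" "\<epsilon> * C' \<le> 1"
    unfolding \<epsilon>_def using \<open>B > 0\<close> \<open>C' > 0\<close> by (simp_all add: field_simps)
  have "\<epsilon> * \<bar>cross w d\<bar> \<le> energy w d r / 2" for w d r
  proof -
    have "\<epsilon> * \<bar>cross w d\<bar> \<le> \<epsilon> * B * energy w d r"
      using mult_left_mono[OF B[of w d r], of \<epsilon>] \<open>\<epsilon> > 0\<close> by (simp add: mult.assoc)
    also have "\<dots> \<le> energy w d r / 2"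
      using mult_right_mono[OF \<open>\<epsilon> * B \<le> 1 / 2\<close> energy_nonneg[of w d r]] by simp
    finally show ?thesis .
  qed
  moreover have "- 2 * dissipation w r + \<epsilon> * cross_rate w d r \<le> - (\<epsilon> / (2 * C)) * energy w d r"
    for w d r
  proof -
    have "cross_rate w d r \<le> C' * dissipation w r - laplacian_sq d / 2"
      using cross_rate_le[of w d r] C'[of w r] by linarith
    from mult_left_mono[OF this, of \<epsilon>] \<open>\<epsilon> > 0\<close>
    have "\<epsilon> * cross_rate w d r \<le> \<epsilon> * C' * dissipation w r - \<epsilon> * laplacian_sq d / 2"
      by (simp add: algebra_simps)
    moreover have "\<epsilon> * C' * dissipation w r \<le> dissipation w r" "\<epsilon> * dissipation w r \<le> dissipation w r"
      using mult_right_mono[OF \<open>\<epsilon> * C' \<le> 1\<close> dissipation_nonneg[of w r]]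
        mult_right_mono[OF \<open>\<epsilon> \<le> 1\<close> dissipation_nonneg[of w r]] by simp_all
    moreover have "\<epsilon> / (2 * C) * energy w d r \<le> \<epsilon> * dissipation w r / 2 + \<epsilon> * laplacian_sq d / 2"
      using mult_left_mono[OF C[of w d r], of "\<epsilon> / (2 * C)"] \<open>\<epsilon> > 0\<close> \<open>C > 0\<close>
      by (simp add: field_simps)
    ultimately show ?thesis using dissipation_nonneg[of w r] by linarith
  qed
  ultimately show thesis
    using that[of \<epsilon> "\<epsilon> / (2 * C)"] \<open>\<epsilon> > 0\<close> \<open>C > 0\<close> by auto
qed

text \<open>The closed loop at time t in the coordinates r = x_c - K1 u_c.\<close>

definition reduced_dynamics_at ::
  "(real \<Rightarrow> 'v \<Rightarrow> real) \<Rightarrow> (real \<Rightarrow> 'v \<Rightarrow> real) \<Rightarrow> (real \<Rightarrow> 'e \<Rightarrow> real) \<Rightarrow> real \<Rightarrow> bool" where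
  "reduced_dynamics_at w d r t \<longleftrightarrow>
     (\<forall>i. ((\<lambda>s. w s i) has_real_derivative
            (node_sum (r t) i - Dmp i * w t i - laplacian (d t) i) / M i) (at t)) \<and>
     (\<forall>i. ((\<lambda>s. d s i) has_real_derivative w t i) (at t)) \<and>
     (\<forall>l. ((\<lambda>s. r s l) has_real_derivative - r t l / tau l - K1 l * edge_diff (w t) l) (at t))"

lemma reduced_dynamics_if_closed_loop_solution:
  assumes "closed_loop_solution M Dmp tau K1 K2 src dst w d c" and "t > 0"
  shows "reduced_dynamics_at w d (\<lambda>s l. c s l - K1 l * edge_diff (d s) l) t"
proof -
  have at: "at t within {0..} = at t" using \<open>t > 0\<close> by (intro at_within_interior) auto
  note loop = assms(1)[unfolded closed_loop_solution_def Let_def, rule_format,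
      OF less_imp_le[OF \<open>t > 0\<close>], unfolded at]
  have sol:
    "\<And>i. ((\<lambda>s. w s i) has_real_derivative
       - (Dmp i / M i) * w t i + (1 / M i) * node_sum (\<lambda>l. c t l - K2 l * edge_diff (d t) l) i) (at t)"
    "\<And>i. ((\<lambda>s. d s i) has_real_derivative w t i) (at t)"
    "\<And>l. ((\<lambda>s. c s l) has_real_derivative - (1 / tau l) * c t l + (K1 l / tau l) * edge_diff (d t) l) (at t)"
    using loop unfolding node_sum_def edge_diff_def by auto
  show ?thesis
    unfolding reduced_dynamics_at_def
  proof (intro conjI allI)
    fix i
    have "node_sum (\<lambda>l. c t l - K2 l * edge_diff (d t) l) i
        = node_sum (\<lambda>l. c t l - K1 l * edge_diff (d t) l) i - laplacian (d t) i"
      unfolding laplacian_def Kgap_def by (simp add: algebra_simps flip: node_sum_diff)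
    then have "- (Dmp i / M i) * w t i + (1 / M i) * node_sum (\<lambda>l. c t l - K2 l * edge_diff (d t) l) i
        = (node_sum (\<lambda>l. c t l - K1 l * edge_diff (d t) l) i - Dmp i * w t i - laplacian (d t) i) / M i"
      using M_pos[of i] by (simp add: field_simps)
    with sol(1)[of i] show "((\<lambda>s. w s i) has_real_derivative
        (node_sum (\<lambda>l. c t l - K1 l * edge_diff (d t) l) i - Dmp i * w t i - laplacian (d t) i) / M i) (at t)"
      by simp
    show "((\<lambda>s. d s i) has_real_derivative w t i) (at t)" by (rule sol(2))
  next
    fix l
    have "((\<lambda>s. c s l - K1 l * edge_diff (d s) l) has_real_derivative
        (- (1 / tau l) * c t l + (K1 l / tau l) * edge_diff (d t) l) - K1 l * edge_diff (w t) l) (at t)"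
      by (intro DERIV_diff DERIV_cmult sol(3) edge_diff_has_derivative sol(2))
    moreover have "- (1 / tau l) * c t l + (K1 l / tau l) * edge_diff (d t) l - K1 l * edge_diff (w t) l
        = - (c t l - K1 l * edge_diff (d t) l) / tau l - K1 l * edge_diff (w t) l"
      using tau_pos[of l] by (simp add: field_simps)
    ultimately show "((\<lambda>s. c s l - K1 l * edge_diff (d s) l) has_real_derivative
        - (c t l - K1 l * edge_diff (d t) l) / tau l - K1 l * edge_diff (w t) l) (at t)"
      by simp
  qed
qed

lemma energy_has_derivative:
  assumes "reduced_dynamics_at w d r t"
  shows "((\<lambda>s. energy (w s) (d s) (r s)) has_real_derivative - 2 * dissipation (w t) (r t)) (at t)"
proof -
  define w' where "w' i = (node_sum (r t) i - Dmp i * w t i - laplacian (d t) i) / M i" for i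
  define r' where "r' l = - r t l / tau l - K1 l * edge_diff (w t) l" for l
  have w: "\<And>i. ((\<lambda>s. w s i) has_real_derivative w' i) (at t)"
    and d: "\<And>i. ((\<lambda>s. d s i) has_real_derivative w t i) (at t)"
    and r: "\<And>l. ((\<lambda>s. r s l) has_real_derivative r' l) (at t)"
    using assms unfolding reduced_dynamics_at_def w'_def r'_def by auto
  have deriv: "((\<lambda>s. energy (w s) (d s) (r s)) has_real_derivative
      (\<Sum>i\<in>UNIV. M i * (2 * w t i * w' i))
      + (\<Sum>l\<in>UNIV. Kgap l * (2 * edge_diff (d t) l * edge_diff (w t) l))
      + (\<Sum>l\<in>UNIV. 2 * r t l * r' l / K1 l)) (at t)"
    unfolding energy_def kinetic_def potential_def ctrl_energy_def
    using less_imp_neq[OF K1_pos, symmetric]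
    by (intro DERIV_add DERIV_sum DERIV_cmult)
       (rule derivative_eq_intros w r edge_diff_has_derivative[OF d] refl
         | simp add: power2_eq_square)+
  have kinetic_rate: "(\<Sum>i\<in>UNIV. M i * (2 * w t i * w' i))
      = 2 * (\<Sum>l\<in>UNIV. r t l * edge_diff (w t) l) - 2 * (\<Sum>i\<in>UNIV. Dmp i * (w t i)\<^sup>2)
        - 2 * (\<Sum>l\<in>UNIV. Kgap l * edge_diff (d t) l * edge_diff (w t) l)"
  proof -
    have "M i * (2 * w t i * w' i)
        = 2 * (w t i * node_sum (r t) i) - 2 * (Dmp i * (w t i)\<^sup>2) - 2 * (w t i * laplacian (d t) i)" for i
      using M_pos[of i] unfolding w'_def by (simp add: field_simps power2_eq_square)
    then show ?thesis
      unfolding laplacian_def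
      by (simp add: sum_subtractf sum_mult_node_sum mult.assoc flip: sum_distrib_left)
  qed
  have potential_rate: "(\<Sum>l\<in>UNIV. Kgap l * (2 * edge_diff (d t) l * edge_diff (w t) l))
      = 2 * (\<Sum>l\<in>UNIV. Kgap l * edge_diff (d t) l * edge_diff (w t) l)"
    by (simp add: sum_distrib_left algebra_simps)
  have ctrl_rate: "(\<Sum>l\<in>UNIV. 2 * r t l * r' l / K1 l)
      = - 2 * (\<Sum>l\<in>UNIV. (r t l)\<^sup>2 / (tau l * K1 l)) - 2 * (\<Sum>l\<in>UNIV. r t l * edge_diff (w t) l)"
  proof -
    have "2 * r t l * r' l / K1 l = - 2 * ((r t l)\<^sup>2 / (tau l * K1 l)) - 2 * (r t l * edge_diff (w t) l)" for l
      using K1_pos[of l] tau_pos[of l] unfolding r'_def by (simp add: field_simps power2_eq_square)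
    then show ?thesis by (simp add: sum_subtractf sum_negf sum_distrib_left)
  qed
  show ?thesis
    using deriv unfolding kinetic_rate potential_rate ctrl_rate dissipation_def by argo
qed

lemma cross_has_derivative:
  assumes "reduced_dynamics_at w d r t"
  shows "((\<lambda>s. cross (w s) (d s)) has_real_derivative cross_rate (w t) (d t) (r t)) (at t)"
proof -
  define w' where "w' i = (node_sum (r t) i - Dmp i * w t i - laplacian (d t) i) / M i" for i
  have w: "\<And>i. ((\<lambda>s. w s i) has_real_derivative w' i) (at t)"
    and d: "\<And>i. ((\<lambda>s. d s i) has_real_derivative w t i) (at t)"
    using assms unfolding reduced_dynamics_at_def w'_def by auto
  have "((\<lambda>s. cross (w s) (d s)) has_real_derivative
      (\<Sum>i\<in>UNIV. M i * w' i * laplacian (d t) i + M i * w t i * laplacian (w t) i)) (at t)"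
    unfolding cross_def
    by (intro DERIV_sum)
       (rule derivative_eq_intros w laplacian_has_derivative[OF d] refl | simp add: algebra_simps)+
  moreover have "M i * w' i = node_sum (r t) i - Dmp i * w t i - laplacian (d t) i" for i
    using M_pos[of i] unfolding w'_def by simp
  ultimately show ?thesis unfolding cross_rate_def by simp
qed

lemma energy_tendsto_0:
  assumes "\<And>t. t > 0 \<Longrightarrow> reduced_dynamics_at w d r t"
  shows "((\<lambda>t. energy (w t) (d t) (r t)) \<longlongrightarrow> 0) at_top"
proof -
  obtain \<epsilon> \<gamma> :: real where "\<epsilon> > 0" "\<gamma> > 0"
    and cross_small: "\<And>w d r. \<epsilon> * \<bar>cross w d\<bar> \<le> energy w d r / 2"
    and decrease: "\<And>w d r. - 2 * dissipation w r + \<epsilon> * cross_rate w d r \<le> - \<gamma> * energy w d r"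
    using strict_lyapunov by blast
  define E where "E t = energy (w t) (d t) (r t)" for t
  define V where "V t = E t + \<epsilon> * cross (w t) (d t)" for t
  have cross_bound: "\<bar>\<epsilon> * cross (w t) (d t)\<bar> \<le> E t / 2" for t
    using cross_small \<open>\<epsilon> > 0\<close> unfolding E_def by (simp add: abs_mult)
  have E_le_V: "E t / 2 \<le> V t" for t
    using abs_le_D2[OF cross_bound[of t]] unfolding V_def by linarith
  have V_le_E: "V t \<le> 3 / 2 * E t" for t
    using abs_le_D1[OF cross_bound[of t]] unfolding V_def by linarith
  have "\<exists>D. (V has_real_derivative D) (at t) \<and> D \<le> - (2 * \<gamma> / 3) * V t" if "1 \<le> t" for t
  proof -
    have dyn: "reduced_dynamics_at w d r t" using assms that by simp
    have "(V has_real_derivative - 2 * dissipation (w t) (r t) + \<epsilon> * cross_rate (w t) (d t) (r t)) (at t)"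
      unfolding V_def E_def
      by (intro DERIV_add DERIV_cmult energy_has_derivative cross_has_derivative dyn)
    moreover have "- \<gamma> * E t \<le> - (2 * \<gamma> / 3) * V t"
      using V_le_E[of t] \<open>\<gamma> > 0\<close> by (simp add: algebra_simps)
    ultimately show ?thesis using decrease unfolding E_def by (meson order_trans)
  qed
  then have V_decay: "V t \<le> V 1 * exp (- (2 * \<gamma> / 3) * (t - 1))" if "1 \<le> t" for t
    using exp_decay_of_deriv_le that by blast
  have E_decay: "0 \<le> E t \<and> E t \<le> 2 * V 1 * exp (- (2 * \<gamma> / 3) * (t - 1))" if "1 \<le> t" for t
  proof
    show "0 \<le> E t" unfolding E_def by (rule energy_nonneg)
    show "E t \<le> 2 * V 1 * exp (- (2 * \<gamma> / 3) * (t - 1))"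
      using E_le_V[of t] V_decay[OF that] by (simp add: mult.assoc)
  qed
  show ?thesis
    unfolding E_def[symmetric] by (rule tendsto_0_if_exp_decay[OF _ E_decay]) (use \<open>\<gamma> > 0\<close> in simp)
qed

lemma edge_diff_tendsto_0:
  assumes "closed_loop_solution M Dmp tau K1 K2 src dst w d c"
  shows "((\<lambda>t. edge_diff (d t) l) \<longlongrightarrow> 0) at_top"
proof -
  define r where "r s l = c s l - K1 l * edge_diff (d s) l" for s l
  have E: "((\<lambda>t. energy (w t) (d t) (r t)) \<longlongrightarrow> 0) at_top"
    unfolding r_def by (intro energy_tendsto_0 reduced_dynamics_if_closed_loop_solution[OF assms])
  have "Kgap l * (edge_diff (d t) l)\<^sup>2 \<le> energy (w t) (d t) (r t)" for t
  proof -
    have "Kgap l * (edge_diff (d t) l)\<^sup>2 \<le> potential (d t)"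
      unfolding potential_def using Kgap_pos by (intro member_le_sum) (simp_all add: less_imp_le)
    then show ?thesis
      unfolding energy_def using kinetic_nonneg[of "w t"] ctrl_energy_nonneg[of "r t"] by linarith
  qed
  then have bound: "(edge_diff (d t) l)\<^sup>2 \<le> energy (w t) (d t) (r t) / Kgap l" for t
    using Kgap_pos[of l] by (simp add: pos_le_divide_eq mult.commute)
  have "((\<lambda>t. (edge_diff (d t) l)\<^sup>2) \<longlongrightarrow> 0) at_top"
  proof (rule tendsto_sandwich[OF _ _ tendsto_const])
    show "\<forall>\<^sub>F t in at_top. 0 \<le> (edge_diff (d t) l)\<^sup>2" by simp
    show "\<forall>\<^sub>F t in at_top. (edge_diff (d t) l)\<^sup>2 \<le> energy (w t) (d t) (r t) / Kgap l"
      using bound by simp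
    show "((\<lambda>t. energy (w t) (d t) (r t) / Kgap l) \<longlongrightarrow> 0) at_top"
      using tendsto_divide_zero[OF E] .
  qed
  then have "((\<lambda>t. sqrt ((edge_diff (d t) l)\<^sup>2)) \<longlongrightarrow> sqrt 0) at_top"
    by (rule tendsto_real_sqrt)
  then show ?thesis by (simp add: tendsto_rabs_zero_iff)
qed

lemma output_consensus:
  assumes "closed_loop_solution M Dmp tau K1 K2 src dst w d c"
  shows "((\<lambda>t. \<bar>d t i - d t j\<bar>) \<longlongrightarrow> 0) at_top"
proof -
  have "equivp (\<lambda>i j. ((\<lambda>t. d t i - d t j) \<longlongrightarrow> 0) at_top)"
  proof (rule equivpI)
    show "reflp (\<lambda>i j. ((\<lambda>t. d t i - d t j) \<longlongrightarrow> 0) at_top)"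
      by (simp add: reflp_def)
    show "symp (\<lambda>i j. ((\<lambda>t. d t i - d t j) \<longlongrightarrow> 0) at_top)"
    proof (rule sympI)
      fix i j assume "((\<lambda>t. d t i - d t j) \<longlongrightarrow> 0) at_top"
      from tendsto_minus[OF this] show "((\<lambda>t. d t j - d t i) \<longlongrightarrow> 0) at_top" by simp
    qed
    show "transp (\<lambda>i j. ((\<lambda>t. d t i - d t j) \<longlongrightarrow> 0) at_top)"
    proof (rule transpI)
      fix i j k assume "((\<lambda>t. d t i - d t j) \<longlongrightarrow> 0) at_top" "((\<lambda>t. d t j - d t k) \<longlongrightarrow> 0) at_top"
      from tendsto_add[OF this] show "((\<lambda>t. d t i - d t k) \<longlongrightarrow> 0) at_top" by simp
    qed
  qed
  then have "((\<lambda>t. d t i - d t j) \<longlongrightarrow> 0) at_top"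
    using edge_diff_tendsto_0[OF assms] unfolding edge_diff_def
    by (rule graph_connected_equivp[OF connected])
  then show ?thesis by (simp add: tendsto_rabs_zero_iff)
qed

end

theorem theorem3:
  fixes M Dmp :: "'v::finite \<Rightarrow> real"
    and tau K1 K2 :: "'e::finite \<Rightarrow> real"
    and src dst :: "'e \<Rightarrow> 'v"
  assumes "simple_graph src dst"
    and "graph_connected src dst"
    and "\<forall>i. M i > 0" and "\<forall>i. Dmp i > 0"
    and "\<forall>l. tau l > 0" and "\<forall>l. K1 l > 0" and "\<forall>l. K2 l > K1 l"
  shows "\<exists>Dc :: (('v \<Rightarrow> real) \<times> ('v \<Rightarrow> real) \<times> ('e \<Rightarrow> real)) set.
           open Dc \<and> ((\<lambda>_. 0), (\<lambda>_. 0), (\<lambda>_. 0)) \<in> Dc \<and>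
           (\<forall>w d c. closed_loop_solution M Dmp tau K1 K2 src dst w d c \<and> (w 0, d 0, c 0) \<in> Dc
              \<longrightarrow> (\<forall>i j. ((\<lambda>t. \<bar>d t i - d t j\<bar>) \<longlongrightarrow> 0) at_top))"
proof -
  interpret consensus_loop M Dmp tau K1 K2 src dst
    using assms unfolding simple_graph_def by unfold_locales auto
  \<comment> \<open>Convergence is global, so the whole state space serves as the domain.\<close>
  show ?thesis
    by (intro exI[of _ UNIV]) (simp add: output_consensus)
qed

end
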